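(* Let $G$ be a finite group of order $mn$ and $H$ a normal subgroup of $G$ of order $n$. Then the family of cosets of $H$ in $G$ other than $H$ itself is an $(mn,m-1,n,0,mn-n)$-DPDF and an $(mn,m-1,n,mn-2n,0)$-EPDF in $G$.
   Context: Groups are written multiplicatively with identity $e$; $G^*=G\setminus\{e\}$. For $D\subseteq G$, $\Delta(D)$ is the multiset $\{xy^{-1}: x,y\in D, x\ne y\}$; for $D_1,D_2\subseteq G$, $\Delta(D_1,D_2)$ is the multiset $\{xy^{-1}:x\in D_1,y\in D_2\}$. For a family $A=\{A_1,\dots,A_s\}$ of pairwise disjoint subsets, ${\rm Int}(A)=\bigcup_i\Delta(A_i)$ and ${\rm Ext}(A)=\bigcup_{i\ne j}\Delta(A_i,A_j)$ (multiset unions). For $|G|=v$, a $(v,s,k,\lambda,\mu)$-DPDF is a family of $s$ pairwise disjoint $k$-subsets of $G^*$ with union $S$ such that ${\rm Int}(A)$ contains each element of $S$ exactly $\lambda$ times and each element of $G\setminus(S\cup\{e\})$ exactly $\mu$ times; a $(v,s,k,\lambda,\mu)$-EPDF is defined the same way using ${\rm Ext}(A)$. *)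

theory Defs
  imports "HOL-Algebra.Algebra" "HOL-Library.Multiset"
begin

definition diff_ms :: "('a, 'b) monoid_scheme \<Rightarrow> 'a set \<Rightarrow> 'a multiset" where
  "diff_ms G D = image_mset (\<lambda>(x, y). x \<otimes>\<^bsub>G\<^esub> inv\<^bsub>G\<^esub> y) (mset_set {(x, y). x \<in> D \<and> y \<in> D \<and> x \<noteq> y})"

definition diff2_ms :: "('a, 'b) monoid_scheme \<Rightarrow> 'a set \<Rightarrow> 'a set \<Rightarrow> 'a multiset" where
  "diff2_ms G D1 D2 = image_mset (\<lambda>(x, y). x \<otimes>\<^bsub>G\<^esub> inv\<^bsub>G\<^esub> y) (mset_set (D1 \<times> D2))"

definition Int_ms :: "('a, 'b) monoid_scheme \<Rightarrow> 'a set set \<Rightarrow> 'a multiset" where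
  "Int_ms G A = (\<Sum>D\<in>A. diff_ms G D)"

definition Ext_ms :: "('a, 'b) monoid_scheme \<Rightarrow> 'a set set \<Rightarrow> 'a multiset" where
  "Ext_ms G A = (\<Sum>P\<in>{(D1, D2). D1 \<in> A \<and> D2 \<in> A \<and> D1 \<noteq> D2}. diff2_ms G (fst P) (snd P))"

definition PDF_prop :: "('a, 'b) monoid_scheme \<Rightarrow> nat \<Rightarrow> nat \<Rightarrow> nat \<Rightarrow> nat \<Rightarrow> nat
    \<Rightarrow> 'a set set \<Rightarrow> 'a multiset \<Rightarrow> bool" where
  "PDF_prop G v s k lam mu A M \<longleftrightarrow>
     finite (carrier G) \<and> card (carrier G) = v \<and>
     finite A \<and> card A = s \<and>
     (\<forall>D\<in>A. D \<subseteq> carrier G - {\<one>\<^bsub>G\<^esub>} \<and> card D = k) \<and>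
     (\<forall>D1\<in>A. \<forall>D2\<in>A. D1 \<noteq> D2 \<longrightarrow> D1 \<inter> D2 = {}) \<and>
     (\<forall>x\<in>\<Union>A. count M x = lam) \<and>
     (\<forall>x\<in>carrier G - (\<Union>A \<union> {\<one>\<^bsub>G\<^esub>}). count M x = mu)"

definition DPDF :: "('a, 'b) monoid_scheme \<Rightarrow> nat \<Rightarrow> nat \<Rightarrow> nat \<Rightarrow> nat \<Rightarrow> nat \<Rightarrow> 'a set set \<Rightarrow> bool" where
  "DPDF G v s k lam mu A \<longleftrightarrow> PDF_prop G v s k lam mu A (Int_ms G A)"

definition EPDF :: "('a, 'b) monoid_scheme \<Rightarrow> nat \<Rightarrow> nat \<Rightarrow> nat \<Rightarrow> nat \<Rightarrow> nat \<Rightarrow> 'a set set \<Rightarrow> bool" where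
  "EPDF G v s k lam mu A \<longleftrightarrow> PDF_prop G v s k lam mu A (Ext_ms G A)"

end

theory Submission
  imports Defs
begin

(* Since a b^-1 = x exactly when a = x b, the multiplicity of x in a difference multiset
   is the number of b for which the pair (x b, b) is admissible. For the right cosets of H
   other than H itself, x b and b lie in a common coset iff x \<in> H. So an x \<in> H - {1} is an
   internal difference once for each b \<notin> H and never an external one, while an x \<notin> H is
   an external difference once for each b outside the disjoint union H \<union> x^-1 H, that is
   |G| - 2|H| times. *)

lemma image_mset_sum:
  "image_mset f (\<Sum>i\<in>I. M i) = (\<Sum>i\<in>I. image_mset f (M i))"
  by (induction I rule: infinite_finite_induct) simp_all

lemma mset_set_UN_disjoint:
  assumes "finite I" "\<And>i. i \<in> I \<Longrightarrow> finite (A i)" "disjoint_family_on A I"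
  shows "mset_set (\<Union>i\<in>I. A i) = (\<Sum>i\<in>I. mset_set (A i))"
  using assms
proof (induction I rule: finite_induct)
  case (insert i I)
  then have "A i \<inter> (\<Union>j\<in>I. A j) = {}"
    by (auto simp: disjoint_family_on_def)
  with insert show ?case
    by (simp add: mset_set_Union disjoint_family_on_insert)
qed simp

lemma count_image_mset_mset_set:
  "finite P \<Longrightarrow> count (image_mset f (mset_set P)) x = card {p \<in> P. f p = x}"
  by (simp add: count_image_mset Int_commute vimage_def Collect_conj_eq)

lemma Int_ms_eq:
  assumes "finite A" "\<And>D. D \<in> A \<Longrightarrow> finite D" "disjoint A"
  shows "Int_ms G A = image_mset (\<lambda>(x, y). x \<otimes>\<^bsub>G\<^esub> inv\<^bsub>G\<^esub> y)
           (mset_set {(a, b). \<exists>D\<in>A. a \<in> D \<and> b \<in> D \<and> a \<noteq> b})"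
proof -
  let ?pairs = "\<lambda>D. {(a, b). a \<in> D \<and> b \<in> D \<and> a \<noteq> b}"
  have "finite (?pairs D)" if "D \<in> A" for D
    by (rule finite_subset[of _ "D \<times> D"]) (auto simp: assms(2)[OF that])
  moreover have "disjoint_family_on ?pairs A"
    using assms(3) by (auto simp: disjoint_family_on_def disjoint_def)
  moreover have "{(a, b). \<exists>D\<in>A. a \<in> D \<and> b \<in> D \<and> a \<noteq> b} = (\<Union>D\<in>A. ?pairs D)"
    by auto
  ultimately show ?thesis
    using assms(1) by (simp add: Int_ms_def diff_ms_def image_mset_sum mset_set_UN_disjoint)
qed

lemma Ext_ms_eq:
  assumes "finite A" "\<And>D. D \<in> A \<Longrightarrow> finite D" "disjoint A"
  shows "Ext_ms G A = image_mset (\<lambda>(x, y). x \<otimes>\<^bsub>G\<^esub> inv\<^bsub>G\<^esub> y)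
           (mset_set {(a, b). \<exists>D1\<in>A. \<exists>D2\<in>A. D1 \<noteq> D2 \<and> a \<in> D1 \<and> b \<in> D2})"
proof -
  let ?blocks = "{(D1, D2). D1 \<in> A \<and> D2 \<in> A \<and> D1 \<noteq> D2}"
  have "finite ?blocks"
    by (rule finite_subset[of _ "A \<times> A"]) (auto simp: assms(1))
  moreover have "finite (fst P \<times> snd P)" if "P \<in> ?blocks" for P
    using that assms(2) by auto
  moreover have "disjoint_family_on (\<lambda>P. fst P \<times> snd P) ?blocks"
    using assms(3) unfolding disjoint_family_on_def disjoint_def by (auto simp: prod_eq_iff)
  ultimately have "(\<Sum>P\<in>?blocks. mset_set (fst P \<times> snd P)) = mset_set (\<Union>P\<in>?blocks. fst P \<times> snd P)"
    by (rule mset_set_UN_disjoint[symmetric])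
  moreover have "(\<Union>P\<in>?blocks. fst P \<times> snd P)
      = {(a, b). \<exists>D1\<in>A. \<exists>D2\<in>A. D1 \<noteq> D2 \<and> a \<in> D1 \<and> b \<in> D2}"
    by fastforce
  ultimately show ?thesis
    by (simp add: Ext_ms_def diff2_ms_def flip: image_mset_sum)
qed

context group
begin

lemma count_quotients_mset_set:
  assumes "finite P" "P \<subseteq> carrier G \<times> carrier G" "x \<in> carrier G"
  shows "count (image_mset (\<lambda>(a, b). a \<otimes> inv b) (mset_set P)) x = card {b. (x \<otimes> b, b) \<in> P}"
proof -
  have "{p \<in> P. (\<lambda>(a, b). a \<otimes> inv b) p = x} = (\<lambda>b. (x \<otimes> b, b)) ` {b. (x \<otimes> b, b) \<in> P}"
  proof (intro equalityI subsetI)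
    fix p assume "p \<in> {p \<in> P. (\<lambda>(a, b). a \<otimes> inv b) p = x}"
    then obtain a b where ab: "p = (a, b)" "(a, b) \<in> P" "a \<otimes> inv b = x" by (cases p) auto
    with assms(2) have "a \<in> carrier G" "b \<in> carrier G" by auto
    with ab(3) assms(3) have "a = x \<otimes> b" by (simp add: inv_solve_right')
    with ab(1,2) show "p \<in> (\<lambda>b. (x \<otimes> b, b)) ` {b. (x \<otimes> b, b) \<in> P}" by auto
  next
    fix p assume "p \<in> (\<lambda>b. (x \<otimes> b, b)) ` {b. (x \<otimes> b, b) \<in> P}"
    then obtain b where b: "p = (x \<otimes> b, b)" "(x \<otimes> b, b) \<in> P" by blast
    with assms(2) have "b \<in> carrier G" by auto
    with b assms(3) show "p \<in> {p \<in> P. (\<lambda>(a, b). a \<otimes> inv b) p = x}" by (simp add: m_assoc)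
  qed
  moreover have "inj (\<lambda>b. (x \<otimes> b, b))"
    by (simp add: inj_def)
  ultimately show ?thesis
    using assms(1) by (simp add: count_image_mset_mset_set card_image inj_on_subset)
qed

lemma count_Int_ms:
  assumes "finite A" "\<And>D. D \<in> A \<Longrightarrow> finite D" "\<And>D. D \<in> A \<Longrightarrow> D \<subseteq> carrier G"
    and "disjoint A" "x \<in> carrier G"
  shows "count (Int_ms G A) x = card {b. \<exists>D\<in>A. x \<otimes> b \<in> D \<and> b \<in> D \<and> x \<otimes> b \<noteq> b}"
proof -
  let ?P = "{(a, b). \<exists>D\<in>A. a \<in> D \<and> b \<in> D \<and> a \<noteq> b}"
  have "?P \<subseteq> \<Union>A \<times> \<Union>A" "finite (\<Union>A)"
    using assms(1,2) by blast+
  then have "finite ?P"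
    using finite_subset by blast
  moreover have "?P \<subseteq> carrier G \<times> carrier G"
    using assms(3) by blast
  ultimately have "count (image_mset (\<lambda>(a, b). a \<otimes> inv b) (mset_set ?P)) x = card {b. (x \<otimes> b, b) \<in> ?P}"
    using assms(5) by (rule count_quotients_mset_set)
  then show ?thesis
    by (simp add: Int_ms_eq[OF assms(1,2,4)])
qed

lemma count_Ext_ms:
  assumes "finite A" "\<And>D. D \<in> A \<Longrightarrow> finite D" "\<And>D. D \<in> A \<Longrightarrow> D \<subseteq> carrier G"
    and "disjoint A" "x \<in> carrier G"
  shows "count (Ext_ms G A) x = card {b. \<exists>D1\<in>A. \<exists>D2\<in>A. D1 \<noteq> D2 \<and> x \<otimes> b \<in> D1 \<and> b \<in> D2}"
proof -
  let ?P = "{(a, b). \<exists>D1\<in>A. \<exists>D2\<in>A. D1 \<noteq> D2 \<and> a \<in> D1 \<and> b \<in> D2}"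
  have "?P \<subseteq> \<Union>A \<times> \<Union>A" "finite (\<Union>A)"
    using assms(1,2) by blast+
  then have "finite ?P"
    using finite_subset by blast
  moreover have "?P \<subseteq> carrier G \<times> carrier G"
    using assms(3) by blast
  ultimately have "count (image_mset (\<lambda>(a, b). a \<otimes> inv b) (mset_set ?P)) x = card {b. (x \<otimes> b, b) \<in> ?P}"
    using assms(5) by (rule count_quotients_mset_set)
  then show ?thesis
    by (simp add: Ext_ms_eq[OF assms(1,2,4)])
qed

lemma rcosets_mem_iff:
  assumes "subgroup H G" "D \<in> rcosets H" "a \<in> carrier G"
  shows "a \<in> D \<longleftrightarrow> D = H #> a"
proof -
  obtain g where "g \<in> carrier G" "D = H #> g"
    using assms(2) unfolding RCOSETS_def by blast
  then show ?thesis
    using repr_independence[of a H g] rcos_self[OF assms(3,1)] assms(1) by auto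
qed

lemma rcos_eq_subgroup_iff:
  assumes "subgroup H G" "a \<in> carrier G"
  shows "H #> a = H \<longleftrightarrow> a \<in> H"
  using coset_join2[OF assms(2,1)] rcos_self[OF assms(2,1)] by auto

lemma nontrivial_rcosets_mem_iff:
  assumes "subgroup H G" "a \<in> carrier G"
  shows "D \<in> rcosets H - {H} \<and> a \<in> D \<longleftrightarrow> D = H #> a \<and> a \<notin> H"
proof -
  have "H #> a \<in> rcosets H"
    using rcosetsI[OF subgroup.subset[OF assms(1)] assms(2)] .
  then show ?thesis
    using rcosets_mem_iff[OF assms(1) _ assms(2)] rcos_eq_subgroup_iff[OF assms] by auto
qed

lemma mult_mem_rcos_iff:
  assumes "subgroup H G" "x \<in> carrier G" "b \<in> carrier G"
  shows "x \<otimes> b \<in> H #> b \<longleftrightarrow> x \<in> H"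
  using assms(2,3) by (simp add: subgroup.rcos_module[OF assms(1) is_group] m_assoc)

lemma rcos_mult_eq_iff:
  assumes "subgroup H G" "x \<in> carrier G" "b \<in> carrier G"
  shows "H #> (x \<otimes> b) = H #> b \<longleftrightarrow> x \<in> H"
  using assms rcosets_mem_iff[OF assms(1) rcosetsI] mult_mem_rcos_iff subgroup.subset
  by (metis m_closed)

lemma Union_nontrivial_rcosets:
  assumes "subgroup H G"
  shows "\<Union>(rcosets H - {H}) = carrier G - H"
proof (intro equalityI subsetI)
  fix a assume "a \<in> \<Union>(rcosets H - {H})"
  moreover then have "a \<in> carrier G"
    using rcosets_part_G[OF assms] by blast
  ultimately show "a \<in> carrier G - H"
    using nontrivial_rcosets_mem_iff[OF assms] by blast
next
  fix a assume "a \<in> carrier G - H"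
  then show "a \<in> \<Union>(rcosets H - {H})"
    using nontrivial_rcosets_mem_iff[OF assms, of a "H #> a"] rcos_self[OF _ assms] by blast
qed

lemma nontrivial_rcosets_Int_fibre:
  assumes "subgroup H G" "x \<in> carrier G"
  shows "{b. \<exists>D\<in>rcosets H - {H}. x \<otimes> b \<in> D \<and> b \<in> D \<and> x \<otimes> b \<noteq> b}
    = (if x \<in> H - {\<one>} then carrier G - H else {})"
proof -
  have "(\<exists>D\<in>rcosets H - {H}. x \<otimes> b \<in> D \<and> b \<in> D \<and> x \<otimes> b \<noteq> b)
      \<longleftrightarrow> x \<in> H - {\<one>} \<and> b \<in> carrier G - H" for b
  proof (cases "b \<in> carrier G")
    case True
    then have "(\<exists>D\<in>rcosets H - {H}. x \<otimes> b \<in> D \<and> b \<in> D \<and> x \<otimes> b \<noteq> b)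
        \<longleftrightarrow> b \<notin> H \<and> x \<otimes> b \<in> H #> b \<and> x \<otimes> b \<noteq> b"
      using nontrivial_rcosets_mem_iff[OF assms(1) True] by blast
    also have "\<dots> \<longleftrightarrow> b \<notin> H \<and> x \<in> H \<and> x \<noteq> \<one>"
      using mult_mem_rcos_iff[OF assms True] True assms(2) by auto
    finally show ?thesis
      using True by blast
  next
    case False
    then show ?thesis
      using rcosets_part_G[OF assms(1)] by blast
  qed
  then show ?thesis
    by auto
qed

lemma nontrivial_rcosets_Ext_fibre:
  assumes "subgroup H G" "x \<in> carrier G"
  shows "{b. \<exists>D1\<in>rcosets H - {H}. \<exists>D2\<in>rcosets H - {H}. D1 \<noteq> D2 \<and> x \<otimes> b \<in> D1 \<and> b \<in> D2}
    = (if x \<in> H then {} else {b \<in> carrier G - H. x \<otimes> b \<notin> H})"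
proof -
  have "(\<exists>D1\<in>rcosets H - {H}. \<exists>D2\<in>rcosets H - {H}. D1 \<noteq> D2 \<and> x \<otimes> b \<in> D1 \<and> b \<in> D2)
      \<longleftrightarrow> x \<notin> H \<and> b \<in> carrier G - H \<and> x \<otimes> b \<notin> H" for b
  proof (cases "b \<in> carrier G")
    case True
    then have "(\<exists>D1\<in>rcosets H - {H}. \<exists>D2\<in>rcosets H - {H}. D1 \<noteq> D2 \<and> x \<otimes> b \<in> D1 \<and> b \<in> D2)
        \<longleftrightarrow> x \<otimes> b \<notin> H \<and> b \<notin> H \<and> H #> (x \<otimes> b) \<noteq> H #> b"
      using nontrivial_rcosets_mem_iff[OF assms(1)] assms(2) by (metis m_closed)
    then show ?thesis
      using True rcos_mult_eq_iff[OF assms True] by blast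
  next
    case False
    then show ?thesis
      using rcosets_part_G[OF assms(1)] by blast
  qed
  then show ?thesis
    by auto
qed

lemma card_outside_subgroup_and_preimage:
  assumes "subgroup H G" "finite (carrier G)" "x \<in> carrier G - H"
  shows "card {b \<in> carrier G - H. x \<otimes> b \<notin> H} = order G - 2 * card H"
proof -
  let ?T = "(\<lambda>h. inv x \<otimes> h) ` H"
  have H: "H \<subseteq> carrier G" "finite H"
    using subgroup.subset[OF assms(1)] assms(2) finite_subset by blast+
  have x: "x \<in> carrier G" "inv x \<in> carrier G" "x \<notin> H"
    using assms(3) by auto
  have "{b \<in> carrier G - H. x \<otimes> b \<notin> H} = carrier G - (H \<union> ?T)"
  proof -
    have "b \<in> ?T \<longleftrightarrow> x \<otimes> b \<in> H" if "b \<in> carrier G" for b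
    proof
      assume "b \<in> ?T"
      then show "x \<otimes> b \<in> H"
        using x H(1) by (auto simp: m_assoc [symmetric])
    next
      assume "x \<otimes> b \<in> H"
      moreover have "b = inv x \<otimes> (x \<otimes> b)"
        using that x by (simp add: m_assoc [symmetric])
      ultimately show "b \<in> ?T"
        by blast
    qed
    moreover have "?T \<subseteq> carrier G"
      using x H(1) by auto
    ultimately show ?thesis
      by blast
  qed
  moreover have "H \<inter> ?T = {}"
  proof -
    have "inv x \<otimes> h \<notin> H" if "h \<in> H" for h
    proof
      assume "inv x \<otimes> h \<in> H"
      then have "inv (inv x \<otimes> h \<otimes> inv h) \<in> H"
        using that assms(1) by (simp add: subgroup.m_closed subgroup.m_inv_closed)
      then show False
        using that x H(1) by (auto simp: m_assoc)
    qed
    then show ?thesis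
      by blast
  qed
  moreover have "card ?T = card H"
    using x H(1) by (intro card_image inj_onI) (metis l_cancel subsetD)
  ultimately have "card (H \<union> ?T) = 2 * card H"
    using H(2) by (simp add: card_Un_disjoint)
  moreover have "H \<union> ?T \<subseteq> carrier G"
    using x H(1) by auto
  ultimately show ?thesis
    using \<open>{b \<in> carrier G - H. x \<otimes> b \<notin> H} = carrier G - (H \<union> ?T)\<close> H(2)
    by (simp add: card_Diff_subset order_def)
qed

lemma nontrivial_rcosets_family:
  assumes "subgroup H G" "finite (carrier G)"
  shows "finite (rcosets H - {H})" "\<And>D. D \<in> rcosets H - {H} \<Longrightarrow> finite D"
    and "\<And>D. D \<in> rcosets H - {H} \<Longrightarrow> D \<subseteq> carrier G" "disjoint (rcosets H - {H})"
proof -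
  show "finite (rcosets H - {H})"
    using rcosets_subset_PowG[OF assms(1)] assms(2) by (simp add: finite_subset)
  show "D \<subseteq> carrier G" if "D \<in> rcosets H - {H}" for D
    using that rcosets_part_G[OF assms(1)] by blast
  then show "finite D" if "D \<in> rcosets H - {H}" for D
    using that assms(2) finite_subset by blast
  show "disjoint (rcosets H - {H})"
    using rcos_disjoint[OF assms(1)] by (rule pairwise_subset) blast
qed

lemma count_Int_ms_nontrivial_rcosets:
  assumes "subgroup H G" "finite (carrier G)" "x \<in> carrier G"
  shows "count (Int_ms G (rcosets H - {H})) x = (if x \<in> H - {\<one>} then order G - card H else 0)"
proof -
  have "count (Int_ms G (rcosets H - {H})) x
      = card {b. \<exists>D\<in>rcosets H - {H}. x \<otimes> b \<in> D \<and> b \<in> D \<and> x \<otimes> b \<noteq> b}"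
    by (rule count_Int_ms[OF nontrivial_rcosets_family[OF assms(1,2)] assms(3)])
  also have "\<dots> = (if x \<in> H - {\<one>} then card (carrier G - H) else 0)"
    by (simp add: nontrivial_rcosets_Int_fibre[OF assms(1,3)])
  finally show ?thesis
    using assms(2) subgroup.subset[OF assms(1)] by (simp add: card_Diff_subset finite_subset order_def)
qed

lemma count_Ext_ms_nontrivial_rcosets:
  assumes "subgroup H G" "finite (carrier G)" "x \<in> carrier G"
  shows "count (Ext_ms G (rcosets H - {H})) x = (if x \<in> H then 0 else order G - 2 * card H)"
proof -
  have "count (Ext_ms G (rcosets H - {H})) x
      = card {b. \<exists>D1\<in>rcosets H - {H}. \<exists>D2\<in>rcosets H - {H}. D1 \<noteq> D2 \<and> x \<otimes> b \<in> D1 \<and> b \<in> D2}"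
    by (rule count_Ext_ms[OF nontrivial_rcosets_family[OF assms(1,2)] assms(3)])
  also have "\<dots> = (if x \<in> H then 0 else card {b \<in> carrier G - H. x \<otimes> b \<notin> H})"
    by (simp add: nontrivial_rcosets_Ext_fibre[OF assms(1,3)])
  finally show ?thesis
    using card_outside_subgroup_and_preimage[OF assms(1,2), of x] assms(3) by auto
qed

lemma nontrivial_rcosets_PDF_prop_iff:
  assumes "subgroup H G" "finite (carrier G)" "card (carrier G) = m * n" "card H = n"
  shows "PDF_prop G (m * n) (m - 1) n lam mu (rcosets H - {H}) M
    \<longleftrightarrow> (\<forall>x\<in>carrier G - H. count M x = lam) \<and> (\<forall>x\<in>H - {\<one>}. count M x = mu)"
proof -
  note family = nontrivial_rcosets_family[OF assms(1,2)]
  have H: "H \<subseteq> carrier G" "\<one> \<in> H"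
    using assms(1) by (auto simp: subgroup.subset subgroup.one_closed)
  then have "n > 0"
    using assms(2,4) card_gt_0_iff finite_subset by blast
  moreover have "card (rcosets H) * n = m * n"
    using lagrange[OF assms(1)] assms(3,4) by (simp add: order_def)
  ultimately have "card (rcosets H) = m"
    by simp
  then have card_family: "card (rcosets H - {H}) = m - 1"
    using family(1) subgroup.subgroup_in_rcosets[OF assms(1) is_group] by simp
  have members: "D \<subseteq> carrier G - {\<one>} \<and> card D = n" if "D \<in> rcosets H - {H}" for D
  proof
    show "D \<subseteq> carrier G - {\<one>}"
      using that Union_nontrivial_rcosets[OF assms(1)] H(2) by blast
    show "card D = n"
      using that card_rcosets_equal[of D H] H(1) assms(4) by simp
  qed
  have "carrier G - (carrier G - H \<union> {\<one>}) = H - {\<one>}"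
    using H(1) by blast
  then show ?thesis
    unfolding PDF_prop_def Union_nontrivial_rcosets[OF assms(1)]
    using assms(2,3) family(1,4) card_family members by (auto simp: disjoint_def)
qed

lemma nontrivial_rcosets_DPDF:
  assumes "subgroup H G" "finite (carrier G)" "card (carrier G) = m * n" "card H = n"
  shows "DPDF G (m * n) (m - 1) n 0 (m * n - n) (rcosets H - {H})"
proof -
  have "count (Int_ms G (rcosets H - {H})) x = 0" if "x \<in> carrier G - H" for x
    using count_Int_ms_nontrivial_rcosets[OF assms(1,2)] that by simp
  moreover have "count (Int_ms G (rcosets H - {H})) x = m * n - n" if "x \<in> H - {\<one>}" for x
    using count_Int_ms_nontrivial_rcosets[OF assms(1,2)] that subgroup.subset[OF assms(1)] assms(3,4)
    by (auto simp: order_def)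
  ultimately show ?thesis
    unfolding DPDF_def nontrivial_rcosets_PDF_prop_iff[OF assms] by blast
qed

lemma nontrivial_rcosets_EPDF:
  assumes "subgroup H G" "finite (carrier G)" "card (carrier G) = m * n" "card H = n"
  shows "EPDF G (m * n) (m - 1) n (m * n - 2 * n) 0 (rcosets H - {H})"
proof -
  have "count (Ext_ms G (rcosets H - {H})) x = m * n - 2 * n" if "x \<in> carrier G - H" for x
    using count_Ext_ms_nontrivial_rcosets[OF assms(1,2)] that assms(3,4) by (simp add: order_def)
  moreover have "count (Ext_ms G (rcosets H - {H})) x = 0" if "x \<in> H - {\<one>}" for x
    using count_Ext_ms_nontrivial_rcosets[OF assms(1,2)] that subgroup.subset[OF assms(1)] by auto
  ultimately show ?thesis
    unfolding EPDF_def nontrivial_rcosets_PDF_prop_iff[OF assms] by blast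
qed

end

theorem mainTheorem9:
  fixes G :: "('a, 'b) monoid_scheme" and H :: "'a set" and m n :: nat
  assumes "group G" and "finite (carrier G)" and "card (carrier G) = m * n"
    and "H \<lhd> G" and "card H = n"
  shows "DPDF G (m * n) (m - 1) n 0 (m * n - n) (rcosets\<^bsub>G\<^esub> H - {H})
       \<and> EPDF G (m * n) (m - 1) n (m * n - 2 * n) 0 (rcosets\<^bsub>G\<^esub> H - {H})"
proof -
  interpret group G by fact
  have "subgroup H G"
    using assms(4) by (rule normal_imp_subgroup)
  with assms(2,3,5) show ?thesis
    using nontrivial_rcosets_DPDF nontrivial_rcosets_EPDF by blast
qed

end
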